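(* Let $n,k,d$ be positive integers with $k\le d<n$, and let $n_1,\dots,n_l$ be positive integers with $n=n_1+\dots+n_l$ and $n_j\ge n-k+1$ for all $j=1,\dots,l$. Define $k_j=n_j-n+k$ and $d_j=n_j-n+d$ for $j=1,\dots,l$. Then for all $\alpha,\gamma>0$, $$C^{\mathrm{exact}}_{n,k,d}(\alpha,\gamma)\ \ge\ \sum_{j=1}^{l}C^{\mathrm{exact}}_{n_j,k_j,d_j}(\alpha,\gamma).$$
   Context: A distributed storage system (DSS) with parameters $(n,k,d)$ stores a file across $n$ nodes, each storing an amount $\alpha$ of information (e.g. $\alpha$ symbols over a finite field, where symbols may be split into arbitrarily many sub-symbols), such that the file can be reconstructed from the contents of any $k$ nodes, and any lost node can be repaired by contacting any $d$ of the remaining nodes, each of which transmits an amount $\beta$ to the replacement node, for a total repair bandwidth $\gamma=d\beta$. Repair is exact: the replacement node stores exactly the same content as the lost node. $C^{\mathrm{exact}}_{n,k,d}(\alpha,\gamma)$ denotes the maximum size of a file that can be stored by such an exact-repair DSS with $n$ nodes, node size $\alpha$ and total repair bandwidth $\gamma$. *)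

theory Defs
  imports Complex_Main "HOL-Library.FuncSet"
begin

text \<open>
  Amounts of information are measured in units of L bits, where the unit L > 0 is free
  (this models splitting symbols into arbitrarily many sub-symbols): a node may take at
  most 2 powr (alpha * L) distinct values, each helper message at most
  2 powr (beta * L) distinct values with beta = gamma / d, and the file size is
  log 2 (card F) / L.
\<close>

definition is_exact_dss ::
  "nat \<Rightarrow> nat \<Rightarrow> nat \<Rightarrow> real \<Rightarrow> real \<Rightarrow> real \<Rightarrow> nat set \<Rightarrow> (nat \<Rightarrow> nat \<Rightarrow> nat) \<Rightarrow> bool"
where
  "is_exact_dss n k d \<alpha> \<gamma> L F enc \<longleftrightarrow>
     L > 0 \<and> finite F \<and> F \<noteq> {} \<and>
     \<comment> \<open>storage constraint\<close>
     (\<forall>i<n. real (card (enc i ` F)) \<le> 2 powr (\<alpha> * L)) \<and>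
     \<comment> \<open>reconstruction from any k nodes\<close>
     (\<forall>K. K \<subseteq> {..<n} \<and> card K = k \<longrightarrow>
        inj_on (\<lambda>f. restrict (\<lambda>j. enc j f) K) F) \<and>
     \<comment> \<open>exact repair of any node i from any d other nodes, each sending beta = gamma/d\<close>
     (\<forall>i<n. \<forall>H. H \<subseteq> {..<n} - {i} \<and> card H = d \<longrightarrow>
        (\<exists>(msg :: nat \<Rightarrow> nat \<Rightarrow> nat) (rep :: (nat \<Rightarrow> nat) \<Rightarrow> nat).
           (\<forall>h\<in>H. real (card ((\<lambda>f. msg h (enc h f)) ` F)) \<le> 2 powr (\<gamma> / real d * L)) \<and>
           (\<forall>f\<in>F. rep (restrict (\<lambda>h. msg h (enc h f)) H) = enc i f)))"

definition C_exact :: "nat \<Rightarrow> nat \<Rightarrow> nat \<Rightarrow> real \<Rightarrow> real \<Rightarrow> real" where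
  "C_exact n k d \<alpha> \<gamma> =
     Sup {log 2 (real (card F)) / L | L F enc. is_exact_dss n k d \<alpha> \<gamma> L F enc}"

end

theory Submission
  imports Defs "HOL-Library.Nat_Bijection" "HOL-Combinatorics.Permutations"
begin

text \<open>Split the \<open>n\<close> nodes into groups of sizes \<open>n\<^sub>j\<close> and run on group \<open>j\<close> an
  \<open>(n\<^sub>j, k\<^sub>j, d\<^sub>j)\<close> code, all component codes in parallel. Any \<open>k\<close> nodes contain at least
  \<open>k\<^sub>j\<close> nodes of group \<open>j\<close>, and any \<open>d\<close> helpers of a failed node contain at least \<open>d\<^sub>j\<close>
  nodes of its group, so every component can be reconstructed and repaired. Component codes with different units \<open>L\<^sub>j\<close> are brought to a common unit \<open>M\<close> by
  repeating each of them \<open>\<lfloor>M/L\<^sub>j\<rfloor>\<close> times, losing a fraction \<open>L\<^sub>j/M\<close> of their rate, which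
  vanishes as \<open>M\<close> grows.\<close>

section \<open>Codes with node-dependent budgets\<close>

definition repairable ::
  "nat set \<Rightarrow> (nat \<Rightarrow> nat \<Rightarrow> nat) \<Rightarrow> nat \<Rightarrow> nat set \<Rightarrow> (nat \<Rightarrow> real) \<Rightarrow> bool"
where
  "repairable F enc i H b \<longleftrightarrow>
     (\<exists>(msg :: nat \<Rightarrow> nat \<Rightarrow> nat) (rep :: (nat \<Rightarrow> nat) \<Rightarrow> nat).
        (\<forall>h\<in>H. real (card ((\<lambda>f. msg h (enc h f)) ` F)) \<le> 2 powr b h) \<and>
        (\<forall>f\<in>F. rep (restrict (\<lambda>h. msg h (enc h f)) H) = enc i f))"

definition budget_dss ::
  "nat \<Rightarrow> nat \<Rightarrow> nat \<Rightarrow> nat set \<Rightarrow> (nat \<Rightarrow> nat \<Rightarrow> nat) \<Rightarrow> (nat \<Rightarrow> real) \<Rightarrow>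
   (nat \<Rightarrow> nat set \<Rightarrow> nat \<Rightarrow> real) \<Rightarrow> bool"
where
  "budget_dss n k d F enc a b \<longleftrightarrow> finite F \<and> F \<noteq> {} \<and>
     (\<forall>i<n. real (card (enc i ` F)) \<le> 2 powr a i) \<and>
     (\<forall>K. K \<subseteq> {..<n} \<and> card K = k \<longrightarrow> inj_on (\<lambda>f. restrict (\<lambda>j. enc j f) K) F) \<and>
     (\<forall>i<n. \<forall>H. H \<subseteq> {..<n} - {i} \<and> card H = d \<longrightarrow> repairable F enc i H (b i H))"

lemma is_exact_dss_iff_budget_dss:
  "is_exact_dss n k d \<alpha> \<gamma> L F enc \<longleftrightarrow>
     0 < L \<and> budget_dss n k d F enc (\<lambda>_. \<alpha> * L) (\<lambda>_ _ _. \<gamma> / real d * L)"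
  unfolding is_exact_dss_def budget_dss_def repairable_def by blast

lemma le_two_powr_mono: "(x::real) \<le> 2 powr a \<Longrightarrow> a \<le> a' \<Longrightarrow> x \<le> 2 powr a'"
  by (erule order_trans) simp

lemma card_image_const_le_powr_0: "real (card ((\<lambda>_. c) ` F)) \<le> 2 powr 0"
proof -
  have "card ((\<lambda>_. c) ` F) \<le> card {c}" by (intro card_mono) auto
  then show ?thesis by simp
qed

lemma repairable_mono:
  assumes "repairable F enc i H b" and "\<And>h. h \<in> H \<Longrightarrow> b h \<le> b' h"
  shows "repairable F enc i H b'"
proof -
  obtain msg :: "nat \<Rightarrow> nat \<Rightarrow> nat" and rep :: "(nat \<Rightarrow> nat) \<Rightarrow> nat"
    where msg: "\<forall>h\<in>H. real (card ((\<lambda>f. msg h (enc h f)) ` F)) \<le> 2 powr b h"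
      and rep: "\<forall>f\<in>F. rep (restrict (\<lambda>h. msg h (enc h f)) H) = enc i f"
    using assms(1) unfolding repairable_def by blast
  have "\<forall>h\<in>H. real (card ((\<lambda>f. msg h (enc h f)) ` F)) \<le> 2 powr b' h"
    using msg assms(2) le_two_powr_mono by blast
  with rep show ?thesis unfolding repairable_def by blast
qed

lemma budget_dss_mono:
  assumes "budget_dss n k d F enc a b"
    and "\<And>i. i < n \<Longrightarrow> a i \<le> a' i"
    and "\<And>i H h. i < n \<Longrightarrow> H \<subseteq> {..<n} - {i} \<Longrightarrow> card H = d \<Longrightarrow> h \<in> H \<Longrightarrow> b i H h \<le> b' i H h"
  shows "budget_dss n k d F enc a' b'"
  unfolding budget_dss_def
proof (intro conjI allI impI)
  show "finite F" "F \<noteq> {}" using assms(1) unfolding budget_dss_def by blast+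
  show "inj_on (\<lambda>f. restrict (\<lambda>j. enc j f) K) F" if "K \<subseteq> {..<n} \<and> card K = k" for K
    using assms(1) that unfolding budget_dss_def by blast
  show "real (card (enc i ` F)) \<le> 2 powr a' i" if "i < n" for i
  proof (rule le_two_powr_mono)
    show "real (card (enc i ` F)) \<le> 2 powr a i" using assms(1) that unfolding budget_dss_def by blast
  qed (rule assms(2)[OF that])
  show "repairable F enc i H (b' i H)" if "i < n" and "H \<subseteq> {..<n} - {i} \<and> card H = d" for i H
  proof (rule repairable_mono)
    show "repairable F enc i H (b i H)" using assms(1) that unfolding budget_dss_def by blast
  qed (use assms(3) that in auto)
qed

section \<open>Parallel products\<close>

text \<open>All alphabets are \<open>nat\<close>, so a tuple of symbols is stored as its \<open>list_encode\<close> code.\<close>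

definition encode_tuple :: "nat \<Rightarrow> (nat \<Rightarrow> nat) \<Rightarrow> nat" where
  "encode_tuple N g = list_encode (map g [0..<N])"

lemma encode_tuple_nth: "t < N \<Longrightarrow> list_decode (encode_tuple N g) ! t = g t"
  by (simp add: encode_tuple_def)

lemma encode_tuple_eq_iff: "encode_tuple N g = encode_tuple N g' \<longleftrightarrow> (\<forall>t<N. g t = g' t)"
  by (auto simp: encode_tuple_def list_encode_eq atLeast0LessThan)

lemma card_tuple_image_le_powr:
  assumes "\<And>x t. x \<in> X \<Longrightarrow> t < N \<Longrightarrow> \<psi> t x \<in> Y t"
    and "\<And>t. t < N \<Longrightarrow> finite (Y t)"
    and "\<And>t. t < N \<Longrightarrow> real (card (Y t)) \<le> 2 powr a t"
  shows "real (card ((\<lambda>x. encode_tuple N (\<lambda>t. \<psi> t x)) ` X)) \<le> 2 powr (\<Sum>t<N. a t)"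
proof -
  have "(\<lambda>x. encode_tuple N (\<lambda>t. \<psi> t x)) ` X \<subseteq> encode_tuple N ` PiE {..<N} Y"
  proof
    fix z assume "z \<in> (\<lambda>x. encode_tuple N (\<lambda>t. \<psi> t x)) ` X"
    then obtain x where "x \<in> X" and z: "z = encode_tuple N (restrict (\<lambda>t. \<psi> t x) {..<N})"
      by (auto simp: encode_tuple_eq_iff)
    with assms(1) show "z \<in> encode_tuple N ` PiE {..<N} Y" by auto
  qed
  then have "card ((\<lambda>x. encode_tuple N (\<lambda>t. \<psi> t x)) ` X) \<le> card (encode_tuple N ` PiE {..<N} Y)"
    using assms(2) by (intro card_mono finite_imageI finite_PiE) auto
  also have "\<dots> \<le> card (PiE {..<N} Y)" by (rule card_image_le) (use assms(2) in \<open>auto intro: finite_PiE\<close>)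
  also have "\<dots> = (\<Prod>t<N. card (Y t))" by (simp add: card_PiE)
  finally have "real (card ((\<lambda>x. encode_tuple N (\<lambda>t. \<psi> t x)) ` X)) \<le> (\<Prod>t<N. real (card (Y t)))"
    by (simp flip: of_nat_prod)
  also have "\<dots> \<le> (\<Prod>t<N. 2 powr a t)" using assms(3) by (intro prod_mono) auto
  also have "\<dots> = 2 powr (\<Sum>t<N. a t)" by (simp add: powr_sum)
  finally show ?thesis .
qed

definition product_files :: "nat \<Rightarrow> (nat \<Rightarrow> nat set) \<Rightarrow> nat set" where
  "product_files N F = encode_tuple N ` PiE {..<N} F"

definition product_enc :: "nat \<Rightarrow> (nat \<Rightarrow> nat \<Rightarrow> nat \<Rightarrow> nat) \<Rightarrow> nat \<Rightarrow> nat \<Rightarrow> nat" where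
  "product_enc N enc i x = encode_tuple N (\<lambda>t. enc t i (list_decode x ! t))"

lemma product_files_nth:
  assumes "x \<in> product_files N F" and "t < N"
  shows "list_decode x ! t \<in> F t"
proof -
  obtain g where "g \<in> PiE {..<N} F" and "x = encode_tuple N g"
    using assms(1) unfolding product_files_def by blast
  with assms(2) show ?thesis by (simp add: encode_tuple_nth PiE_mem)
qed

lemma product_files_eqI:
  assumes "x \<in> product_files N F" "y \<in> product_files N F"
    and "\<And>t. t < N \<Longrightarrow> list_decode x ! t = list_decode y ! t"
  shows "x = y"
proof -
  obtain g g' where "g \<in> PiE {..<N} F" "x = encode_tuple N g" "g' \<in> PiE {..<N} F" "y = encode_tuple N g'"
    using assms(1,2) unfolding product_files_def by blast
  moreover from this assms(3) have "\<forall>t<N. g t = g' t" by (simp add: encode_tuple_nth)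
  ultimately show ?thesis by (simp add: encode_tuple_eq_iff)
qed

lemma card_product_files: "card (product_files N F) = (\<Prod>t<N. card (F t))"
proof -
  have "inj_on (encode_tuple N) (PiE {..<N} F)"
  proof (rule inj_onI)
    fix g g' assume "g \<in> PiE {..<N} F" "g' \<in> PiE {..<N} F" "encode_tuple N g = encode_tuple N g'"
    then show "g = g'" by (intro PiE_ext[of g "{..<N}" F]) (auto simp: encode_tuple_eq_iff)
  qed
  then show ?thesis by (simp add: product_files_def card_image card_PiE)
qed

lemma repairable_choice:
  assumes "\<And>t. t < N \<Longrightarrow> repairable (F t) (enc t) i H (b t)"
  obtains msg :: "nat \<Rightarrow> nat \<Rightarrow> nat \<Rightarrow> nat" and rep :: "nat \<Rightarrow> (nat \<Rightarrow> nat) \<Rightarrow> nat"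
  where "\<forall>t<N. \<forall>h\<in>H. real (card ((\<lambda>f. msg t h (enc t h f)) ` F t)) \<le> 2 powr b t h"
    and "\<forall>t<N. \<forall>f\<in>F t. rep t (restrict (\<lambda>h. msg t h (enc t h f)) H) = enc t i f"
proof -
  have "\<forall>t\<in>{..<N}. \<exists>(msg :: nat \<Rightarrow> nat \<Rightarrow> nat) (rep :: (nat \<Rightarrow> nat) \<Rightarrow> nat).
      (\<forall>h\<in>H. real (card ((\<lambda>f. msg h (enc t h f)) ` F t)) \<le> 2 powr b t h) \<and>
      (\<forall>f\<in>F t. rep (restrict (\<lambda>h. msg h (enc t h f)) H) = enc t i f)"
    using assms by (auto simp: repairable_def)
  from bchoice[OF this] obtain msg :: "nat \<Rightarrow> nat \<Rightarrow> nat \<Rightarrow> nat" where "\<forall>t\<in>{..<N}. \<exists>rep.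
      (\<forall>h\<in>H. real (card ((\<lambda>f. msg t h (enc t h f)) ` F t)) \<le> 2 powr b t h) \<and>
      (\<forall>f\<in>F t. rep (restrict (\<lambda>h. msg t h (enc t h f)) H) = enc t i f)" ..
  from bchoice[OF this] obtain rep :: "nat \<Rightarrow> (nat \<Rightarrow> nat) \<Rightarrow> nat"
    where "\<forall>t\<in>{..<N}. (\<forall>h\<in>H. real (card ((\<lambda>f. msg t h (enc t h f)) ` F t)) \<le> 2 powr b t h) \<and>
      (\<forall>f\<in>F t. rep t (restrict (\<lambda>h. msg t h (enc t h f)) H) = enc t i f)" ..
  then show ?thesis by (intro that[of msg rep]) blast+
qed

lemma repairable_product:
  assumes "\<And>t. t < N \<Longrightarrow> finite (F t)"
    and "\<And>t. t < N \<Longrightarrow> repairable (F t) (enc t) i H (b t)"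
  shows "repairable (product_files N F) (product_enc N enc) i H (\<lambda>h. \<Sum>t<N. b t h)"
proof -
  obtain msg :: "nat \<Rightarrow> nat \<Rightarrow> nat \<Rightarrow> nat" and rep :: "nat \<Rightarrow> (nat \<Rightarrow> nat) \<Rightarrow> nat"
    where msg: "\<forall>t<N. \<forall>h\<in>H. real (card ((\<lambda>f. msg t h (enc t h f)) ` F t)) \<le> 2 powr b t h"
      and rep: "\<forall>t<N. \<forall>f\<in>F t. rep t (restrict (\<lambda>h. msg t h (enc t h f)) H) = enc t i f"
    by (rule repairable_choice[OF assms(2)])
  define msg' where "msg' h y = encode_tuple N (\<lambda>t. msg t h (list_decode y ! t))" for h y
  define rep' where "rep' g = encode_tuple N (\<lambda>t. rep t (restrict (\<lambda>h. list_decode (g h) ! t) H))" for g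
  have msg'_enc: "msg' h (product_enc N enc h x) = encode_tuple N (\<lambda>t. msg t h (enc t h (list_decode x ! t)))"
    for h x by (simp add: msg'_def product_enc_def encode_tuple_eq_iff encode_tuple_nth)
  show ?thesis unfolding repairable_def
  proof (intro exI conjI ballI)
    fix h assume "h \<in> H"
    show "real (card ((\<lambda>x. msg' h (product_enc N enc h x)) ` product_files N F)) \<le> 2 powr (\<Sum>t<N. b t h)"
      unfolding msg'_enc
    proof (rule card_tuple_image_le_powr)
      show "msg t h (enc t h (list_decode x ! t)) \<in> (\<lambda>f. msg t h (enc t h f)) ` F t"
        if "x \<in> product_files N F" and "t < N" for x t
        using product_files_nth[OF that] by (rule imageI)
      show "finite ((\<lambda>f. msg t h (enc t h f)) ` F t)" if "t < N" for t
        using assms(1)[OF that] by (rule finite_imageI)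
      show "real (card ((\<lambda>f. msg t h (enc t h f)) ` F t)) \<le> 2 powr b t h" if "t < N" for t
        using msg \<open>h \<in> H\<close> that by blast
    qed
  next
    fix x assume x: "x \<in> product_files N F"
    have restr: "restrict (\<lambda>h. list_decode (restrict (\<lambda>h. msg' h (product_enc N enc h x)) H h) ! t) H
          = restrict (\<lambda>h. msg t h (enc t h (list_decode x ! t))) H" if "t < N" for t
      using that by (auto simp: msg'_enc encode_tuple_nth intro!: restrict_ext)
    show "rep' (restrict (\<lambda>h. msg' h (product_enc N enc h x)) H) = product_enc N enc i x"
      unfolding rep'_def product_enc_def[of N enc i] encode_tuple_eq_iff
    proof (intro allI impI)
      fix t assume t: "t < N"
      show "rep t (restrict (\<lambda>h. list_decode (restrict (\<lambda>h. msg' h (product_enc N enc h x)) H h) ! t) H)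
            = enc t i (list_decode x ! t)"
        unfolding restr[OF t] using rep t product_files_nth[OF x t] by blast
    qed
  qed
qed

lemma budget_dss_product:
  assumes "\<And>t. t < N \<Longrightarrow> budget_dss n k d (F t) (enc t) (a t) (b t)"
  shows "budget_dss n k d (product_files N F) (product_enc N enc)
           (\<lambda>i. \<Sum>t<N. a t i) (\<lambda>i H h. \<Sum>t<N. b t i H h)"
  unfolding budget_dss_def
proof (intro conjI allI impI)
  have fin: "\<And>t. t < N \<Longrightarrow> finite (F t)" using assms unfolding budget_dss_def by blast
  then show "finite (product_files N F)" unfolding product_files_def by (intro finite_imageI finite_PiE) auto
  show "product_files N F \<noteq> {}"
    using assms unfolding budget_dss_def product_files_def by (simp add: PiE_eq_empty_iff)
  show "real (card (product_enc N enc i ` product_files N F)) \<le> 2 powr (\<Sum>t<N. a t i)" if "i < n" for i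
    unfolding product_enc_def using that assms fin product_files_nth[of _ N F]
    by (intro card_tuple_image_le_powr[where Y = "\<lambda>t. enc t i ` F t"]) (auto simp: budget_dss_def)
  show "repairable (product_files N F) (product_enc N enc) i H (\<lambda>h. \<Sum>t<N. b t i H h)"
    if "i < n" and "H \<subseteq> {..<n} - {i} \<and> card H = d" for i H
    using that assms fin by (intro repairable_product) (auto simp: budget_dss_def)
  show "inj_on (\<lambda>x. restrict (\<lambda>j. product_enc N enc j x) K) (product_files N F)"
    if K: "K \<subseteq> {..<n} \<and> card K = k" for K
  proof (rule inj_onI)
    fix x y assume x: "x \<in> product_files N F" and y: "y \<in> product_files N F"
      and eq: "restrict (\<lambda>j. product_enc N enc j x) K = restrict (\<lambda>j. product_enc N enc j y) K"
    show "x = y"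
    proof (rule product_files_eqI[OF x y])
      fix t assume t: "t < N"
      have "restrict (\<lambda>j. enc t j (list_decode x ! t)) K = restrict (\<lambda>j. enc t j (list_decode y ! t)) K"
      proof (rule restrict_ext)
        fix j assume "j \<in> K"
        then have "product_enc N enc j x = product_enc N enc j y" using fun_cong[OF eq, of j] by simp
        with t show "enc t j (list_decode x ! t) = enc t j (list_decode y ! t)"
          by (simp add: product_enc_def encode_tuple_eq_iff)
      qed
      moreover have "inj_on (\<lambda>f. restrict (\<lambda>j. enc t j f) K) (F t)"
        using assms[OF t] K unfolding budget_dss_def by blast
      ultimately show "list_decode x ! t = list_decode y ! t"
        using product_files_nth[OF x t] product_files_nth[OF y t] by (auto dest: inj_onD)
    qed
  qed
qed

section \<open>Embedding a code into a larger system\<close>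

definition embed_enc :: "nat set \<Rightarrow> (nat \<Rightarrow> nat) \<Rightarrow> (nat \<Rightarrow> nat \<Rightarrow> nat) \<Rightarrow> nat \<Rightarrow> nat \<Rightarrow> nat" where
  "embed_enc G \<sigma> enc x f = (if x \<in> G then enc (\<sigma> x) f else 0)"

lemma card_le_card_inter_plus:
  assumes "K \<subseteq> {..<n}" and "G \<subseteq> {..<n}"
  shows "card K \<le> card (K \<inter> G) + (n - card G)"
proof -
  have "finite K" "finite G" using assms finite_subset by blast+
  then have "card K \<le> card ((K \<inter> G) \<union> ({..<n} - G))" using assms by (intro card_mono) auto
  also have "\<dots> \<le> card (K \<inter> G) + card ({..<n} - G)" by (rule card_Un_le)
  also have "card ({..<n} - G) = n - card G" using assms(2) \<open>finite G\<close> by (simp add: card_Diff_subset)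
  finally show ?thesis .
qed

lemma repairable_const_node:
  assumes "\<And>f. f \<in> F \<Longrightarrow> enc i f = c"
  shows "repairable F enc i H (\<lambda>_. 0)"
  unfolding repairable_def
proof (intro exI conjI ballI)
  show "real (card ((\<lambda>f. (\<lambda>_ _. 0) h (enc h f)) ` F)) \<le> 2 powr 0" for h
    by (rule card_image_const_le_powr_0)
  show "(\<lambda>_. c) (restrict (\<lambda>h. (\<lambda>_ _. 0) h (enc h f)) H) = enc i f" if "f \<in> F" for f
    using assms[OF that] by simp
qed

lemma repairable_embed:
  assumes rep: "repairable F enc (\<sigma> i) (\<sigma> ` S) (\<lambda>_. B)"
    and inj: "inj_on \<sigma> G" and S: "S \<subseteq> H \<inter> G" and i: "i \<in> G"
  shows "repairable F (embed_enc G \<sigma> enc) i H (\<lambda>h. if h \<in> S then B else 0)"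
proof -
  obtain msg :: "nat \<Rightarrow> nat \<Rightarrow> nat" and rep :: "(nat \<Rightarrow> nat) \<Rightarrow> nat"
    where msg: "\<forall>h\<in>\<sigma> ` S. real (card ((\<lambda>f. msg h (enc h f)) ` F)) \<le> 2 powr B"
      and rep: "\<forall>f\<in>F. rep (restrict (\<lambda>h. msg h (enc h f)) (\<sigma> ` S)) = enc (\<sigma> i) f"
    using assms(1) unfolding repairable_def by blast
  define msg' where "msg' h y = (if h \<in> S then msg (\<sigma> h) y else 0)" for h y
  define rep' where "rep' g = rep (restrict (\<lambda>y. g (the_inv_into G \<sigma> y)) (\<sigma> ` S))" for g
  have msg'_embed: "msg' h (embed_enc G \<sigma> enc h f) = msg (\<sigma> h) (enc (\<sigma> h) f)" if "h \<in> S" for h f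
    using that S by (auto simp: msg'_def embed_enc_def)
  show ?thesis unfolding repairable_def
  proof (intro exI conjI ballI)
    fix h assume "h \<in> H"
    show "real (card ((\<lambda>f. msg' h (embed_enc G \<sigma> enc h f)) ` F)) \<le> 2 powr (if h \<in> S then B else 0)"
    proof (cases "h \<in> S")
      case True
      then show ?thesis using msg by (simp add: msg'_embed)
    next
      case False
      then show ?thesis using card_image_const_le_powr_0[of 0 F] by (simp add: msg'_def)
    qed
  next
    fix f assume "f \<in> F"
    have "restrict (\<lambda>y. restrict (\<lambda>h. msg' h (embed_enc G \<sigma> enc h f)) H (the_inv_into G \<sigma> y)) (\<sigma> ` S)
          = restrict (\<lambda>h. msg h (enc h f)) (\<sigma> ` S)"
    proof (rule restrict_ext)
      fix y assume "y \<in> \<sigma> ` S"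
      then obtain x where "x \<in> S" and y: "y = \<sigma> x" by blast
      with S have "the_inv_into G \<sigma> y = x" and "x \<in> H" using the_inv_into_f_f[OF inj] by auto
      with \<open>x \<in> S\<close> y show "restrict (\<lambda>h. msg' h (embed_enc G \<sigma> enc h f)) H (the_inv_into G \<sigma> y)
          = msg y (enc y f)" by (simp add: msg'_embed)
    qed
    then show "rep' (restrict (\<lambda>h. msg' h (embed_enc G \<sigma> enc h f)) H) = embed_enc G \<sigma> enc i f"
      using rep \<open>f \<in> F\<close> i by (simp add: rep'_def embed_enc_def)
  qed
qed

lemma inj_on_restrict_embed:
  assumes "inj_on (\<lambda>f. restrict (\<lambda>j. enc j f) (\<sigma> ` K')) F" and "K' \<subseteq> K \<inter> G"
  shows "inj_on (\<lambda>f. restrict (\<lambda>j. embed_enc G \<sigma> enc j f) K) F"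
proof (rule inj_onI)
  fix f g assume "f \<in> F" "g \<in> F"
    and eq: "restrict (\<lambda>j. embed_enc G \<sigma> enc j f) K = restrict (\<lambda>j. embed_enc G \<sigma> enc j g) K"
  have "restrict (\<lambda>j. enc j f) (\<sigma> ` K') = restrict (\<lambda>j. enc j g) (\<sigma> ` K')"
  proof (rule restrict_ext)
    fix y assume "y \<in> \<sigma> ` K'"
    then obtain x where "x \<in> K" "x \<in> G" "y = \<sigma> x" using assms(2) by blast
    then show "enc y f = enc y g" using fun_cong[OF eq, of x] by (simp add: embed_enc_def)
  qed
  with assms(1) \<open>f \<in> F\<close> \<open>g \<in> F\<close> show "f = g" by (auto dest: inj_onD)
qed

lemma budget_dss_embed:
  assumes code: "budget_dss m k' d' F enc (\<lambda>_. A) (\<lambda>_ _ _. B)"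
    and G: "G \<subseteq> {..<n}" and \<sigma>: "bij_betw \<sigma> G {..<m}" and k: "k' + (n - m) \<le> k"
    and S: "\<And>i H. i \<in> G \<Longrightarrow> H \<subseteq> {..<n} - {i} \<Longrightarrow> card H = d \<Longrightarrow> S i H \<subseteq> H \<inter> G \<and> card (S i H) = d'"
  shows "budget_dss n k d F (embed_enc G \<sigma> enc) (\<lambda>x. if x \<in> G then A else 0)
           (\<lambda>i H h. if i \<in> G \<and> h \<in> S i H then B else 0)"
  unfolding budget_dss_def
proof (intro conjI allI impI)
  have inj: "inj_on \<sigma> G" and \<sigma>_G: "\<sigma> ` G = {..<m}"
    using \<sigma> by (auto simp: bij_betw_def)
  have card_G: "card G = m" using bij_betw_same_card[OF \<sigma>] by simp
  have \<sigma>_less: "\<sigma> x < m" if "x \<in> G" for x using \<sigma>_G that by auto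
  show "finite F" "F \<noteq> {}" using code unfolding budget_dss_def by blast+
  show "real (card (embed_enc G \<sigma> enc x ` F)) \<le> 2 powr (if x \<in> G then A else 0)" if "x < n" for x
  proof (cases "x \<in> G")
    case True
    with \<sigma>_less[OF True] code show ?thesis by (simp add: embed_enc_def budget_dss_def)
  next
    case False
    then show ?thesis using card_image_const_le_powr_0[of 0 F] by (simp add: embed_enc_def)
  qed
  show "inj_on (\<lambda>f. restrict (\<lambda>j. embed_enc G \<sigma> enc j f) K) F" if "K \<subseteq> {..<n} \<and> card K = k" for K
  proof -
    have "k' \<le> card (K \<inter> G)" using card_le_card_inter_plus[of K n G] that G card_G k by linarith
    then obtain K' where K': "K' \<subseteq> K \<inter> G" "card K' = k'" by (meson obtain_subset_with_card_n)
    then have "\<sigma> ` K' \<subseteq> {..<m}" and "card (\<sigma> ` K') = k'"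
      using inj \<sigma>_less by (auto simp: card_image inj_on_subset)
    with code have "inj_on (\<lambda>f. restrict (\<lambda>j. enc j f) (\<sigma> ` K')) F"
      unfolding budget_dss_def by blast
    then show ?thesis using K'(1) by (rule inj_on_restrict_embed)
  qed
  show "repairable F (embed_enc G \<sigma> enc) i H (\<lambda>h. if i \<in> G \<and> h \<in> S i H then B else 0)"
    if "i < n" and H: "H \<subseteq> {..<n} - {i} \<and> card H = d" for i H
  proof (cases "i \<in> G")
    case True
    have S_iH: "S i H \<subseteq> H \<inter> G" and "card (S i H) = d'" using S[OF True] H by auto
    then have "i \<notin> S i H" using H by auto
    then have "\<sigma> ` S i H \<subseteq> {..<m} - {\<sigma> i}" and "card (\<sigma> ` S i H) = d'"
      using True S_iH inj \<sigma>_less \<open>card (S i H) = d'\<close>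
      by (auto simp: card_image inj_on_subset dest: inj_onD)
    moreover have "\<sigma> i < m" using \<sigma>_less[OF True] .
    ultimately have "repairable F enc (\<sigma> i) (\<sigma> ` S i H) (\<lambda>_. B)"
      using code unfolding budget_dss_def by blast
    then have "repairable F (embed_enc G \<sigma> enc) i H (\<lambda>h. if h \<in> S i H then B else 0)"
      using inj S_iH True by (rule repairable_embed)
    with True show ?thesis by simp
  next
    case False
    then have "repairable F (embed_enc G \<sigma> enc) i H (\<lambda>_. 0)"
      by (intro repairable_const_node[where c = 0]) (simp add: embed_enc_def)
    with False show ?thesis by simp
  qed
qed

section \<open>Groups and helper selection\<close>

text \<open>Node \<open>p\<close> is node \<open>loc p\<close> of the component code placed on group \<open>g p\<close>.\<close>

definition group_labelling :: "nat \<Rightarrow> nat \<Rightarrow> (nat \<Rightarrow> nat) \<Rightarrow> (nat \<Rightarrow> nat) \<Rightarrow> (nat \<Rightarrow> nat) \<Rightarrow> bool" where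
  "group_labelling n l ns g loc \<longleftrightarrow>
     (\<forall>p<n. g p < l) \<and> (\<forall>t<l. bij_betw loc {p. p < n \<and> g p = t} {..<ns t})"

lemma exists_group_labelling:
  assumes "n = (\<Sum>t<l. ns t)"
  obtains g loc where "group_labelling n l ns g loc"
proof -
  have "card (SIGMA t:{..<l}. {..<ns t}) = n" using assms by (simp add: card_SigmaI)
  then obtain \<beta> where \<beta>: "bij_betw \<beta> {..<n} (SIGMA t:{..<l}. {..<ns t})"
    by (metis card_lessThan finite_SigmaI finite_lessThan finite_same_card_bij)
  have "group_labelling n l ns (\<lambda>p. fst (\<beta> p)) (\<lambda>p. snd (\<beta> p))"
    unfolding group_labelling_def
  proof (intro conjI allI impI)
    show "fst (\<beta> p) < l" if "p < n" for p using bij_betwE[OF \<beta>] that by (metis SigmaE fst_conv lessThan_iff)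
    fix t assume "t < l"
    show "bij_betw (\<lambda>p. snd (\<beta> p)) {p. p < n \<and> fst (\<beta> p) = t} {..<ns t}"
    proof (rule bij_betw_imageI)
      show "inj_on (\<lambda>p. snd (\<beta> p)) {p. p < n \<and> fst (\<beta> p) = t}"
      proof (rule inj_onI)
        fix p q assume "p \<in> {p. p < n \<and> fst (\<beta> p) = t}" "q \<in> {p. p < n \<and> fst (\<beta> p) = t}"
          and "snd (\<beta> p) = snd (\<beta> q)"
        then have "\<beta> p = \<beta> q" by (simp add: prod_eq_iff)
        with \<open>p \<in> _\<close> \<open>q \<in> _\<close> show "p = q" using bij_betw_imp_inj_on[OF \<beta>] by (auto dest: inj_onD)
      qed
      show "(\<lambda>p. snd (\<beta> p)) ` {p. p < n \<and> fst (\<beta> p) = t} = {..<ns t}"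
      proof (intro equalityI subsetI)
        fix y assume "y \<in> {..<ns t}"
        with \<open>t < l\<close> have "(t, y) \<in> \<beta> ` {..<n}" using bij_betw_imp_surj_on[OF \<beta>] by auto
        then obtain p where "p < n" and "\<beta> p = (t, y)" by auto
        then show "y \<in> (\<lambda>p. snd (\<beta> p)) ` {p. p < n \<and> fst (\<beta> p) = t}"
          by (auto intro: image_eqI[where x = p])
      qed (use bij_betwE[OF \<beta>] in force)
    qed
  qed
  then show ?thesis by (rule that)
qed

lemma card_group:
  "group_labelling n l ns g loc \<Longrightarrow> t < l \<Longrightarrow> card {p. p < n \<and> g p = t} = ns t"
  unfolding group_labelling_def using bij_betw_same_card by fastforce

lemma group_labelling_permutes:
  assumes "group_labelling n l ns g loc" and \<pi>: "\<pi> permutes {..<n}"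
  shows "group_labelling n l ns (g \<circ> \<pi>) (loc \<circ> \<pi>)"
  unfolding group_labelling_def
proof (intro conjI allI impI)
  show "(g \<circ> \<pi>) p < l" if "p < n" for p
    using assms(1) that permutes_in_image[OF \<pi>] unfolding group_labelling_def by simp
  fix t assume "t < l"
  have "\<pi> ` {p. p < n \<and> g (\<pi> p) = t} = {q. q < n \<and> g q = t}"
  proof (intro equalityI subsetI)
    fix q assume "q \<in> {q. q < n \<and> g q = t}"
    then have "inv \<pi> q \<in> {p. p < n \<and> g (\<pi> p) = t}" and "q = \<pi> (inv \<pi> q)"
      using permutes_in_image[OF permutes_inv[OF \<pi>]] permutes_inverses[OF \<pi>] by auto
    then show "q \<in> \<pi> ` {p. p < n \<and> g (\<pi> p) = t}" by blast
  qed (use permutes_in_image[OF \<pi>] in auto)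
  then have "bij_betw \<pi> {p. p < n \<and> (g \<circ> \<pi>) p = t} {q. q < n \<and> g q = t}"
    by (auto intro: bij_betw_subset[OF permutes_imp_bij[OF \<pi>]])
  then show "bij_betw (loc \<circ> \<pi>) {p. p < n \<and> (g \<circ> \<pi>) p = t} {..<ns t}"
    using assms(1) \<open>t < l\<close> unfolding group_labelling_def by (blast intro: bij_betw_trans)
qed

lemma card_rank_less:
  fixes \<rho> :: "'a \<Rightarrow> nat"
  assumes "finite A" and "inj_on \<rho> A" and "r \<le> card A"
  shows "card {x\<in>A. card {y\<in>A. \<rho> y < \<rho> x} < r} = r"
proof -
  define rk where "rk x = card {y\<in>A. \<rho> y < \<rho> x}" for x
  have rk_less: "rk x < rk x'" if "x \<in> A" "x' \<in> A" "\<rho> x < \<rho> x'" for x x'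
    unfolding rk_def using that assms(1) by (intro psubset_card_mono) auto
  have inj_rk: "inj_on rk A"
  proof (rule inj_onI)
    fix x x' assume x: "x \<in> A" "x' \<in> A" "rk x = rk x'"
    show "x = x'"
    proof (rule ccontr)
      assume "x \<noteq> x'"
      then have "\<rho> x \<noteq> \<rho> x'" using inj_onD[OF assms(2)] x by blast
      then have "\<rho> x < \<rho> x' \<or> \<rho> x' < \<rho> x" by arith
      then show False using rk_less[OF x(1,2)] rk_less[OF x(2,1)] x(3) by auto
    qed
  qed
  have "rk x < card A" if "x \<in> A" for x
    unfolding rk_def using that assms(1) by (intro psubset_card_mono) auto
  then have rk_A: "rk ` A = {..<card A}"
    using card_image[OF inj_rk] by (intro card_subset_eq) auto
  have "rk ` {x\<in>A. rk x < r} = {..<r}"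
  proof (intro equalityI subsetI)
    fix j assume "j \<in> {..<r}"
    then have "j \<in> rk ` A" using rk_A assms(3) by auto
    with \<open>j \<in> {..<r}\<close> show "j \<in> rk ` {x\<in>A. rk x < r}" by auto
  qed auto
  moreover have "inj_on rk {x\<in>A. rk x < r}" using inj_rk by (rule inj_on_subset) auto
  ultimately have "card {x\<in>A. rk x < r} = r" using card_image card_lessThan by metis
  then show ?thesis unfolding rk_def .
qed

text \<open>Node \<open>i\<close> is repaired only from the \<open>r (g i)\<close> helpers of its own group that come first
  in the order \<open>\<rho>\<close>.\<close>

definition helpers :: "(nat \<Rightarrow> nat) \<Rightarrow> (nat \<Rightarrow> nat) \<Rightarrow> (nat \<Rightarrow> nat) \<Rightarrow> nat \<Rightarrow> nat set \<Rightarrow> nat set" where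
  "helpers g \<rho> r i H = {x\<in>H. g x = g i \<and> card {y\<in>H. g y = g i \<and> \<rho> y < \<rho> x} < r (g i)}"

lemma helpers_subset: "helpers g \<rho> r i H \<subseteq> {x\<in>H. g x = g i}"
  unfolding helpers_def by blast

lemma card_helpers:
  assumes "finite H" and "inj_on \<rho> H" and "r (g i) \<le> card {x\<in>H. g x = g i}"
  shows "card (helpers g \<rho> r i H) = r (g i)"
proof -
  let ?A = "{x\<in>H. g x = g i}"
  have "helpers g \<rho> r i H = {x\<in>?A. card {y\<in>?A. \<rho> y < \<rho> x} < r (g i)}"
    unfolding helpers_def by (auto intro!: arg_cong[where f = card])
  also have "card \<dots> = r (g i)"
    using assms by (intro card_rank_less) (auto intro: inj_on_subset)
  finally show ?thesis .
qed

lemma helpers_in_group: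
  assumes lab: "group_labelling n l ns g loc" and \<rho>: "inj_on \<rho> {..<n}" and "i < n"
    and H: "H \<subseteq> {..<n} - {i}" "card H = d"
  shows "helpers g \<rho> (\<lambda>t. ns t + d - n) i H \<subseteq> H \<inter> {p. p < n \<and> g p = g i}"
    and "card (helpers g \<rho> (\<lambda>t. ns t + d - n) i H) = ns (g i) + d - n"
proof -
  let ?G = "{p. p < n \<and> g p = g i}"
  have "g i < l" using lab \<open>i < n\<close> unfolding group_labelling_def by blast
  have "H \<subseteq> {..<n}" using H(1) by blast
  then have fin: "finite H" and inj: "inj_on \<rho> H" and HG: "{x\<in>H. g x = g i} = H \<inter> ?G"
    using \<rho> by (auto intro: finite_subset inj_on_subset)
  show "helpers g \<rho> (\<lambda>t. ns t + d - n) i H \<subseteq> H \<inter> ?G"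
    using helpers_subset[of g \<rho> _ i H] unfolding HG .
  have "?G \<subseteq> {..<n}" by auto
  then have "card ?G \<le> n" and "d \<le> card (H \<inter> ?G) + (n - card ?G)"
    using card_mono[OF finite_lessThan] card_le_card_inter_plus[OF \<open>H \<subseteq> {..<n}\<close>] H(2) by auto
  moreover have "card ?G = ns (g i)" using card_group[OF lab \<open>g i < l\<close>] .
  ultimately have "ns (g i) + d - n \<le> card {x\<in>H. g x = g i}" unfolding HG by linarith
  with fin inj show "card (helpers g \<rho> (\<lambda>t. ns t + d - n) i H) = ns (g i) + d - n"
    by (intro card_helpers)
qed

lemma budget_dss_grouped:
  assumes lab: "group_labelling n l ns g loc" and \<rho>: "inj_on \<rho> {..<n}"
    and k: "\<And>t. t < l \<Longrightarrow> n \<le> ns t + k"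
    and codes: "\<And>t. t < l \<Longrightarrow> is_exact_dss (ns t) (ns t + k - n) (ns t + d - n) \<alpha> \<gamma> M (Fc t) (Ec t)"
  shows "budget_dss n k d (product_files l Fc)
           (product_enc l (\<lambda>t. embed_enc {p. p < n \<and> g p = t} loc (Ec t))) (\<lambda>_. \<alpha> * M)
           (\<lambda>i H h. if h \<in> helpers g \<rho> (\<lambda>t. ns t + d - n) i H then \<gamma> / real (ns (g i) + d - n) * M else 0)"
proof -
  define G where "G t = {p. p < n \<and> g p = t}" for t
  define dd where "dd t = ns t + d - n" for t
  have g_less: "g p < l" if "p < n" for p using lab that unfolding group_labelling_def by blast
  have ns_le: "ns t \<le> n" if "t < l" for t
    using card_group[OF lab that] card_mono[OF finite_lessThan, of "G t" n] by (auto simp: G_def)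
  have helpers_G: "helpers g \<rho> dd i H \<subseteq> H \<inter> G t \<and> card (helpers g \<rho> dd i H) = dd t"
    if "t < l" and i: "i \<in> G t" and H: "H \<subseteq> {..<n} - {i}" "card H = d" for t i H
  proof -
    have "i < n" and gi: "g i = t" using i by (auto simp: G_def)
    show ?thesis
      using helpers_in_group[OF lab \<rho> \<open>i < n\<close> H] unfolding dd_def[symmetric] G_def gi by blast
  qed
  have embedded: "budget_dss n k d (Fc t) (embed_enc (G t) loc (Ec t)) (\<lambda>x. if x \<in> G t then \<alpha> * M else 0)
      (\<lambda>i H h. if i \<in> G t \<and> h \<in> helpers g \<rho> dd i H then \<gamma> / real (dd t) * M else 0)" if "t < l" for t
  proof (rule budget_dss_embed)
    show "budget_dss (ns t) (ns t + k - n) (dd t) (Fc t) (Ec t) (\<lambda>_. \<alpha> * M) (\<lambda>_ _ _. \<gamma> / real (dd t) * M)"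
      using codes[OF that] by (simp add: is_exact_dss_iff_budget_dss dd_def)
    show "G t \<subseteq> {..<n}" by (auto simp: G_def)
    show "bij_betw loc (G t) {..<ns t}" using lab that unfolding group_labelling_def G_def by blast
    show "ns t + k - n + (n - ns t) \<le> k" using k[OF that] ns_le[OF that] by linarith
  qed (rule helpers_G[OF that])
  have "budget_dss n k d (product_files l Fc) (product_enc l (\<lambda>t. embed_enc (G t) loc (Ec t)))
      (\<lambda>i. \<Sum>t<l. if i \<in> G t then \<alpha> * M else 0)
      (\<lambda>i H h. \<Sum>t<l. if i \<in> G t \<and> h \<in> helpers g \<rho> dd i H then \<gamma> / real (dd t) * M else 0)"
    by (rule budget_dss_product) (rule embedded)
  then show ?thesis unfolding G_def[symmetric] dd_def[symmetric]
  proof (rule budget_dss_mono)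
    fix i assume "i < n"
    then have G_iff: "i \<in> G t \<longleftrightarrow> t = g i" for t by (auto simp: G_def)
    show "(\<Sum>t<l. if i \<in> G t then \<alpha> * M else 0) \<le> \<alpha> * M"
      using g_less[OF \<open>i < n\<close>] by (simp add: G_iff)
    show "(\<Sum>t<l. if i \<in> G t \<and> h \<in> helpers g \<rho> dd i H then \<gamma> / real (dd t) * M else 0)
        \<le> (if h \<in> helpers g \<rho> dd i H then \<gamma> / real (dd (g i)) * M else 0)" for H h
      using g_less[OF \<open>i < n\<close>] by (simp add: G_iff)
  qed
qed

section \<open>Averaging over relabellings\<close>

lemma permutes_image_Collect:
  assumes \<tau>: "\<tau> permutes H"
  shows "\<tau> ` {y\<in>H. P (\<tau> y)} = {z\<in>H. P z}"
proof (intro equalityI subsetI)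
  fix z assume "z \<in> {z\<in>H. P z}"
  then have "inv \<tau> z \<in> {y\<in>H. P (\<tau> y)}" and "z = \<tau> (inv \<tau> z)"
    using permutes_in_image[OF permutes_inv[OF \<tau>]] permutes_inverses[OF \<tau>] by auto
  then show "z \<in> \<tau> ` {y\<in>H. P (\<tau> y)}" by blast
qed (use permutes_in_image[OF \<tau>] in auto)

lemma helpers_permutes:
  assumes \<tau>: "\<tau> permutes H" and "i \<notin> H" and "x \<in> H"
  shows "x \<in> helpers (g \<circ> \<tau>) (\<rho> \<circ> \<tau>) r i H \<longleftrightarrow> \<tau> x \<in> helpers g \<rho> r i H"
proof -
  have "card {y\<in>H. g (\<tau> y) = g i \<and> \<rho> (\<tau> y) < \<rho> (\<tau> x)}
      = card (\<tau> ` {y\<in>H. g (\<tau> y) = g i \<and> \<rho> (\<tau> y) < \<rho> (\<tau> x)})"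
    by (rule card_image[symmetric]) (rule permutes_inj_on[OF \<tau>])
  also have "\<tau> ` {y\<in>H. g (\<tau> y) = g i \<and> \<rho> (\<tau> y) < \<rho> (\<tau> x)} = {z\<in>H. g z = g i \<and> \<rho> z < \<rho> (\<tau> x)}"
    by (rule permutes_image_Collect[OF \<tau>])
  finally have "card {y\<in>H. g (\<tau> y) = g i \<and> \<rho> (\<tau> y) < \<rho> (\<tau> x)}
      = card {z\<in>H. g z = g i \<and> \<rho> z < \<rho> (\<tau> x)}" .
  moreover have "\<tau> i = i" using permutes_not_in[OF \<tau> assms(2)] .
  ultimately show ?thesis
    using assms(3) permutes_in_image[OF \<tau>] unfolding helpers_def by auto
qed

text \<open>Composing with the transposition of two helpers exchanges their roles, so all helpers carry
  the same total load.\<close>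

lemma sum_permutes_helper_weight:
  fixes w :: "nat \<Rightarrow> real"
  assumes H: "H \<subseteq> U" "i \<notin> H" "card H = d" "0 < d" and "h \<in> H"
    and total: "\<And>\<pi>. \<pi> permutes U \<Longrightarrow> real (card (helpers (g \<circ> \<pi>) \<pi> r i H)) * w ((g \<circ> \<pi>) i) = c"
  shows "(\<Sum>\<pi> | \<pi> permutes U. if h \<in> helpers (g \<circ> \<pi>) \<pi> r i H then w ((g \<circ> \<pi>) i) else 0)
           = real (card {\<pi>. \<pi> permutes U}) * c / real d"
proof -
  define P where "P = {\<pi>. \<pi> permutes U}"
  define f where "f h' \<pi> = (if h' \<in> helpers (g \<circ> \<pi>) \<pi> r i H then w ((g \<circ> \<pi>) i) else 0)" for h' \<pi>
  have "finite H" using H(3,4) card_ge_0_finite by blast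
  have same: "sum (f h) P = sum (f h') P" if "h \<in> H" "h' \<in> H" for h h'
  proof -
    define \<tau> where "\<tau> = transpose h h'"
    have \<tau>_H: "\<tau> permutes H" and \<tau>_U: "\<tau> permutes U"
      unfolding \<tau>_def using that H(1) by (auto intro: permutes_swap_id)
    have "bij_betw (\<lambda>\<pi>. \<pi> \<circ> \<tau>) P P"
      by (rule bij_betwI[where g = "\<lambda>\<pi>. \<pi> \<circ> \<tau>"])
         (auto simp: P_def \<tau>_def comp_assoc intro: permutes_compose[OF \<tau>_U[unfolded \<tau>_def]])
    then have "sum (f h) P = sum (\<lambda>\<pi>. f h (\<pi> \<circ> \<tau>)) P" by (rule sum.reindex_bij_betw[symmetric])
    also have "\<dots> = sum (f h') P"
    proof (rule sum.cong[OF refl])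
      fix \<pi>
      have "\<tau> i = i" and "\<tau> h = h'" using permutes_not_in[OF \<tau>_H H(2)] by (auto simp: \<tau>_def)
      then show "f h (\<pi> \<circ> \<tau>) = f h' \<pi>"
        using helpers_permutes[OF \<tau>_H H(2) \<open>h \<in> H\<close>, of "g \<circ> \<pi>" \<pi> r] by (simp add: f_def comp_assoc)
    qed
    finally show ?thesis .
  qed
  have "real d * sum (f h) P = (\<Sum>h'\<in>H. sum (f h) P)" using H(3) by simp
  also have "\<dots> = (\<Sum>h'\<in>H. sum (f h') P)" using same[OF \<open>h \<in> H\<close>] by (rule sum.cong[OF refl])
  also have "\<dots> = (\<Sum>\<pi>\<in>P. \<Sum>h'\<in>H. f h' \<pi>)" by (rule sum.swap)
  also have "\<dots> = (\<Sum>\<pi>\<in>P. c)"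
  proof (rule sum.cong[OF refl])
    fix \<pi> assume "\<pi> \<in> P"
    have "(\<Sum>h'\<in>H. f h' \<pi>) = (\<Sum>h'\<in>helpers (g \<circ> \<pi>) \<pi> r i H. w ((g \<circ> \<pi>) i))"
      unfolding f_def using \<open>finite H\<close> helpers_subset[of "g \<circ> \<pi>" \<pi> r i H]
      by (simp add: sum.If_cases Int_absorb1 subset_iff)
    also have "\<dots> = c" using total \<open>\<pi> \<in> P\<close> by (simp add: P_def)
    finally show "(\<Sum>h'\<in>H. f h' \<pi>) = c" .
  qed
  finally show ?thesis using H(4) unfolding f_def P_def by (simp add: field_simps)
qed

lemma sum_permutes_helper_load:
  fixes n k d l :: nat and ns :: "nat \<Rightarrow> nat"
  defines "dd \<equiv> \<lambda>t. ns t + d - n"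
  assumes lab: "group_labelling n l ns g loc" and "k \<le> d" and ns: "\<And>t. t < l \<Longrightarrow> n < ns t + k"
    and "i < n" and H: "H \<subseteq> {..<n} - {i}" "card H = d" and "h \<in> H"
  shows "(\<Sum>\<pi> | \<pi> permutes {..<n}.
            if h \<in> helpers (g \<circ> \<pi>) \<pi> dd i H then \<gamma> / real (dd ((g \<circ> \<pi>) i)) * M else 0)
         = real (card {\<pi>. \<pi> permutes {..<n}}) * (\<gamma> * M) / real d"
proof -
  have card_helpers_\<pi>: "card (helpers (g \<circ> \<pi>) \<pi> dd i H) = dd ((g \<circ> \<pi>) i)"
    and dd_pos: "0 < dd ((g \<circ> \<pi>) i)"
    and helpers_H: "helpers (g \<circ> \<pi>) \<pi> dd i H \<subseteq> H" if "\<pi> permutes {..<n}" for \<pi>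
  proof -
    have lab\<pi>: "group_labelling n l ns (g \<circ> \<pi>) (loc \<circ> \<pi>)" by (rule group_labelling_permutes[OF lab that])
    note sel = helpers_in_group[OF lab\<pi> permutes_inj_on[OF that] \<open>i < n\<close> H, folded dd_def]
    show "card (helpers (g \<circ> \<pi>) \<pi> dd i H) = dd ((g \<circ> \<pi>) i)" using sel(2) by (simp add: dd_def)
    show "helpers (g \<circ> \<pi>) \<pi> dd i H \<subseteq> H" using sel(1) by blast
    have "(g \<circ> \<pi>) i < l" using lab\<pi> \<open>i < n\<close> unfolding group_labelling_def by blast
    then show "0 < dd ((g \<circ> \<pi>) i)" using ns \<open>k \<le> d\<close> by (fastforce simp: dd_def)
  qed
  have "finite H" using finite_subset[OF H(1) finite_Diff[OF finite_lessThan]] .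
  then have "card (helpers g id dd i H) \<le> d" using card_mono helpers_H[OF permutes_id] H(2) by auto
  then have "0 < d" using card_helpers_\<pi>[OF permutes_id] dd_pos[OF permutes_id] by simp
  show ?thesis
  proof (rule sum_permutes_helper_weight[where w = "\<lambda>t. \<gamma> / real (dd t) * M"])
    show "real (card (helpers (g \<circ> \<pi>) \<pi> dd i H)) * (\<gamma> / real (dd ((g \<circ> \<pi>) i)) * M) = \<gamma> * M"
      if "\<pi> permutes {..<n}" for \<pi>
      using card_helpers_\<pi>[OF that] dd_pos[OF that] by simp
  qed (use H \<open>0 < d\<close> \<open>h \<in> H\<close> in auto)
qed

lemma exact_dss_combine:
  fixes n k d l :: nat and ns :: "nat \<Rightarrow> nat"
  assumes "k \<le> d" and "n = (\<Sum>t<l. ns t)" and ns: "\<And>t. t < l \<Longrightarrow> n < ns t + k" and "0 < M"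
    and codes: "\<And>t. t < l \<Longrightarrow> is_exact_dss (ns t) (ns t + k - n) (ns t + d - n) \<alpha> \<gamma> M (Fc t) (Ec t)"
  obtains N F enc where "0 < N" and "is_exact_dss n k d \<alpha> \<gamma> (real N * M) F enc"
    and "card F = (\<Prod>t<l. card (Fc t)) ^ N"
proof -
  obtain g loc where lab: "group_labelling n l ns g loc" using exists_group_labelling[OF assms(2)] .
  define dd where "dd = (\<lambda>t. ns t + d - n)"
  define P where "P = {\<pi>. \<pi> permutes {..<n}}"
  define N where "N = card P"
  have "finite P" unfolding P_def by (rule finite_permutations) simp
  moreover have "id \<in> P" unfolding P_def by (simp add: permutes_id)
  ultimately have "0 < N" unfolding N_def by (auto simp: card_gt_0_iff)
  obtain pe where pe: "bij_betw pe {..<N} P"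
    using ex_bij_betw_nat_finite[OF \<open>finite P\<close>] unfolding N_def atLeast0LessThan by blast
  define E where "E \<pi> = product_enc l (\<lambda>t. embed_enc {p. p < n \<and> (g \<circ> \<pi>) p = t} (loc \<circ> \<pi>) (Ec t))" for \<pi>
  define b where "b \<pi> i H h = (if h \<in> helpers (g \<circ> \<pi>) \<pi> dd i H then \<gamma> / real (dd ((g \<circ> \<pi>) i)) * M else 0)"
    for \<pi> i H h
  have relabelled: "budget_dss n k d (product_files l Fc) (E \<pi>) (\<lambda>_. \<alpha> * M) (b \<pi>)" if "\<pi> \<in> P" for \<pi>
  proof -
    have \<pi>: "\<pi> permutes {..<n}" using that by (simp add: P_def)
    show ?thesis
      unfolding E_def b_def dd_def
      using budget_dss_grouped[OF group_labelling_permutes[OF lab \<pi>] permutes_inj_on[OF \<pi>] _ codes] ns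
      by (simp add: less_imp_le)
  qed
  have "budget_dss n k d (product_files N (\<lambda>_. product_files l Fc)) (product_enc N (\<lambda>s. E (pe s)))
      (\<lambda>i. \<Sum>s<N. \<alpha> * M) (\<lambda>i H h. \<Sum>s<N. b (pe s) i H h)"
    using relabelled bij_betwE[OF pe] by (intro budget_dss_product) auto
  then have "budget_dss n k d (product_files N (\<lambda>_. product_files l Fc)) (product_enc N (\<lambda>s. E (pe s)))
      (\<lambda>_. \<alpha> * (real N * M)) (\<lambda>_ _ _. \<gamma> / real d * (real N * M))"
  proof (rule budget_dss_mono)
    show "(\<Sum>s<N. \<alpha> * M) \<le> \<alpha> * (real N * M)" for i by simp
    fix i H h assume "i < n" and "H \<subseteq> {..<n} - {i}" "card H = d" and "h \<in> H"
    have "(\<Sum>s<N. b (pe s) i H h) = (\<Sum>\<pi>\<in>P. b \<pi> i H h)" by (rule sum.reindex_bij_betw[OF pe])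
    also have "\<dots> = real N * (\<gamma> * M) / real d"
      unfolding P_def N_def b_def dd_def
      by (rule sum_permutes_helper_load[OF lab \<open>k \<le> d\<close> ns \<open>i < n\<close> \<open>H \<subseteq> _\<close> \<open>card H = d\<close> \<open>h \<in> H\<close>])
    finally show "(\<Sum>s<N. b (pe s) i H h) \<le> \<gamma> / real d * (real N * M)" by (simp add: field_simps)
  qed
  moreover have "card (product_files N (\<lambda>_. product_files l Fc)) = (\<Prod>t<l. card (Fc t)) ^ N"
    by (simp add: card_product_files)
  ultimately show ?thesis
    using \<open>0 < N\<close> \<open>0 < M\<close> by (intro that) (auto simp: is_exact_dss_iff_budget_dss)
qed

section \<open>Rates\<close>

lemma exact_dss_repeat:
  assumes code: "is_exact_dss n k d \<alpha> \<gamma> L F enc" and mL: "real m * L \<le> M" and "0 < M"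
    and "0 \<le> \<alpha>" and "0 \<le> \<gamma>"
  obtains F' enc' where "is_exact_dss n k d \<alpha> \<gamma> M F' enc'" and "card F' = card F ^ m"
proof -
  have "budget_dss n k d F enc (\<lambda>_. \<alpha> * L) (\<lambda>_ _ _. \<gamma> / real d * L)"
    using code by (simp add: is_exact_dss_iff_budget_dss)
  then have "budget_dss n k d (product_files m (\<lambda>_. F)) (product_enc m (\<lambda>_. enc))
      (\<lambda>i. \<Sum>s<m. \<alpha> * L) (\<lambda>i H h. \<Sum>s<m. \<gamma> / real d * L)"
    by (intro budget_dss_product)
  then have "budget_dss n k d (product_files m (\<lambda>_. F)) (product_enc m (\<lambda>_. enc))
      (\<lambda>_. \<alpha> * M) (\<lambda>_ _ _. \<gamma> / real d * M)"
  proof (rule budget_dss_mono)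
    show "(\<Sum>s<m. \<alpha> * L) \<le> \<alpha> * M" for i
      using mult_left_mono[OF mL \<open>0 \<le> \<alpha>\<close>] by (simp add: mult.left_commute)
    show "(\<Sum>s<m. \<gamma> / real d * L) \<le> \<gamma> / real d * M" for i H h
      using mult_left_mono[OF mL, of "\<gamma> / real d"] \<open>0 \<le> \<gamma>\<close> by (simp add: mult.left_commute)
  qed
  with \<open>0 < M\<close> show ?thesis
    by (intro that[of "product_files m (\<lambda>_. F)" "product_enc m (\<lambda>_. enc)"])
       (simp_all add: is_exact_dss_iff_budget_dss card_product_files)
qed

definition dss_ratios :: "nat \<Rightarrow> nat \<Rightarrow> nat \<Rightarrow> real \<Rightarrow> real \<Rightarrow> real set" where
  "dss_ratios n k d \<alpha> \<gamma> = {log 2 (real (card F)) / L | L F enc. is_exact_dss n k d \<alpha> \<gamma> L F enc}"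

lemma C_exact_eq_Sup_dss_ratios: "C_exact n k d \<alpha> \<gamma> = Sup (dss_ratios n k d \<alpha> \<gamma>)"
  unfolding C_exact_def dss_ratios_def ..

lemma dss_ratios_nonempty:
  assumes "0 \<le> \<alpha>" and "0 \<le> \<gamma>"
  shows "dss_ratios n k d \<alpha> \<gamma> \<noteq> {}"
proof -
  have "is_exact_dss n k d \<alpha> \<gamma> 1 {0} (\<lambda>_ _. 0)"
    using assms unfolding is_exact_dss_def
    by (auto intro!: exI[of _ "\<lambda>_ _. 0"] exI[of _ "\<lambda>_. 0"] ge_one_powr_ge_zero)
  then show ?thesis unfolding dss_ratios_def by blast
qed

lemma dss_ratio_nonneg:
  assumes "r \<in> dss_ratios n k d \<alpha> \<gamma>"
  shows "0 \<le> r"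
proof -
  obtain L F enc where "r = log 2 (real (card F)) / L" and "is_exact_dss n k d \<alpha> \<gamma> L F enc"
    using assms unfolding dss_ratios_def by blast
  moreover from this have "0 < L" and "1 \<le> card F"
    unfolding is_exact_dss_def by (auto simp: Suc_le_eq card_gt_0_iff)
  ultimately show ?thesis by simp
qed

lemma dss_ratio_le_k_alpha:
  assumes code: "is_exact_dss n k d \<alpha> \<gamma> L F enc" and "k \<le> n"
  shows "log 2 (real (card F)) / L \<le> real k * \<alpha>"
proof -
  have "0 < L" "finite F" "F \<noteq> {}" and store: "\<And>j. j < n \<Longrightarrow> real (card (enc j ` F)) \<le> 2 powr (\<alpha> * L)"
    using code unfolding is_exact_dss_def by blast+
  have "inj_on (\<lambda>f. restrict (\<lambda>j. enc j f) {..<k}) F"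
    using code \<open>k \<le> n\<close> unfolding is_exact_dss_def by auto
  moreover have "(\<lambda>f. restrict (\<lambda>j. enc j f) {..<k}) ` F \<subseteq> PiE {..<k} (\<lambda>j. enc j ` F)"
    by (intro image_subsetI) (simp add: restrict_PiE_iff)
  ultimately have "card F \<le> card (PiE {..<k} (\<lambda>j. enc j ` F))"
    using \<open>finite F\<close> by (intro card_inj_on_le) (auto intro: finite_PiE)
  then have "real (card F) \<le> (\<Prod>j<k. real (card (enc j ` F)))" by (simp add: card_PiE flip: of_nat_prod)
  also have "\<dots> \<le> (\<Prod>j<k. 2 powr (\<alpha> * L))" using store \<open>k \<le> n\<close> by (intro prod_mono) auto
  also have "\<dots> = 2 powr (real k * \<alpha> * L)" by (simp add: powr_realpow [symmetric] powr_powr mult_ac)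
  finally have "log 2 (real (card F)) \<le> real k * \<alpha> * L"
    using \<open>finite F\<close> \<open>F \<noteq> {}\<close> by (subst log_le_iff) (auto simp: card_gt_0_iff)
  with \<open>0 < L\<close> show ?thesis by (simp add: divide_le_eq mult.commute mult.left_commute)
qed

lemma bdd_above_dss_ratios: "k \<le> n \<Longrightarrow> bdd_above (dss_ratios n k d \<alpha> \<gamma>)"
  unfolding dss_ratios_def bdd_above_def using dss_ratio_le_k_alpha by blast

lemma dss_ratio_le_C_exact: "r \<in> dss_ratios n k d \<alpha> \<gamma> \<Longrightarrow> k \<le> n \<Longrightarrow> r \<le> C_exact n k d \<alpha> \<gamma>"
  unfolding C_exact_eq_Sup_dss_ratios by (rule cSup_upper) (auto intro: bdd_above_dss_ratios)

lemma C_exact_approx: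
  assumes "k \<le> n" and "0 \<le> \<alpha>" and "0 \<le> \<gamma>" and "0 < \<epsilon>"
  obtains r where "r \<in> dss_ratios n k d \<alpha> \<gamma>" and "C_exact n k d \<alpha> \<gamma> - \<epsilon> < r"
proof -
  have "C_exact n k d \<alpha> \<gamma> - \<epsilon> < Sup (dss_ratios n k d \<alpha> \<gamma>)"
    using \<open>0 < \<epsilon>\<close> by (simp add: C_exact_eq_Sup_dss_ratios)
  then show ?thesis
    using less_cSup_iff[OF dss_ratios_nonempty[OF assms(2,3)] bdd_above_dss_ratios[OF assms(1)]] that
    by blast
qed

lemma dss_ratios_repeat:
  assumes "r \<in> dss_ratios n k d \<alpha> \<gamma>" and "0 \<le> \<alpha>" and "0 \<le> \<gamma>"
  shows "\<exists>L>0. \<forall>M\<ge>L. \<exists>F enc. is_exact_dss n k d \<alpha> \<gamma> M F enc \<and> (M - L) * r \<le> log 2 (real (card F))"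
proof -
  obtain L F enc where r: "r = log 2 (real (card F)) / L" and code: "is_exact_dss n k d \<alpha> \<gamma> L F enc"
    using assms(1) unfolding dss_ratios_def by blast
  have "0 < L" using code unfolding is_exact_dss_def by blast
  have "0 \<le> r" using dss_ratio_nonneg[OF assms(1)] .
  have "\<exists>F' enc'. is_exact_dss n k d \<alpha> \<gamma> M F' enc' \<and> (M - L) * r \<le> log 2 (real (card F'))"
    if "L \<le> M" for M
  proof -
    have "0 < M" using \<open>0 < L\<close> \<open>L \<le> M\<close> by linarith
    define m where "m = nat \<lfloor>M / L\<rfloor>"
    have "1 \<le> M / L" using \<open>0 < L\<close> \<open>L \<le> M\<close> by simp
    then have m: "real m = of_int \<lfloor>M / L\<rfloor>" by (simp add: m_def)
    have "of_int \<lfloor>M / L\<rfloor> * L \<le> M / L * L"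
      using \<open>0 < L\<close> by (intro mult_right_mono) simp_all
    then have "real m * L \<le> M" using \<open>0 < L\<close> by (simp add: m)
    have "M / L - 1 < of_int \<lfloor>M / L\<rfloor>" by linarith
    then have "M - L < real m * L" using \<open>0 < L\<close> by (simp add: m field_simps)
    obtain F' enc' where code': "is_exact_dss n k d \<alpha> \<gamma> M F' enc'" and "card F' = card F ^ m"
      by (rule exact_dss_repeat[OF code \<open>real m * L \<le> M\<close> \<open>0 < M\<close> assms(2,3)])
    then have "log 2 (real (card F')) = real m * L * r"
      using \<open>0 < L\<close> by (simp add: r log_nat_power)
    moreover have "(M - L) * r \<le> real m * L * r"
      using \<open>M - L < real m * L\<close> \<open>0 \<le> r\<close> by (simp add: mult_right_mono)
    ultimately show ?thesis using code' by auto
  qed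
  with \<open>0 < L\<close> show ?thesis by blast
qed

lemma sum_log_card_le_C_exact:
  fixes n k d l :: nat and ns :: "nat \<Rightarrow> nat"
  assumes "k \<le> d" and "k \<le> n" and "n = (\<Sum>t<l. ns t)" and "\<And>t. t < l \<Longrightarrow> n < ns t + k" and "0 < M"
    and codes: "\<And>t. t < l \<Longrightarrow> is_exact_dss (ns t) (ns t + k - n) (ns t + d - n) \<alpha> \<gamma> M (F t) (enc t)"
  shows "(\<Sum>t<l. log 2 (real (card (F t)))) / M \<le> C_exact n k d \<alpha> \<gamma>"
proof -
  obtain N F' enc' where "0 < N" and code: "is_exact_dss n k d \<alpha> \<gamma> (real N * M) F' enc'"
    and card_F': "card F' = (\<Prod>t<l. card (F t)) ^ N"
    by (rule exact_dss_combine[OF assms(1,3,4,5) codes])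
  have card_pos: "0 < real (card (F t))" if "t < l" for t
    using codes[OF that] unfolding is_exact_dss_def by (auto simp: card_gt_0_iff)
  have "log 2 (real (card F')) = real N * log 2 (\<Prod>t<l. real (card (F t)))"
    unfolding card_F' of_nat_power of_nat_prod by (rule log_nat_power) (simp add: prod_nonneg)
  also have "log 2 (\<Prod>t<l. real (card (F t))) = (\<Sum>t<l. log 2 (real (card (F t))))"
    unfolding log_def sum_divide_distrib[symmetric] using card_pos by (subst ln_prod) auto
  finally have "(\<Sum>t<l. log 2 (real (card (F t)))) / M = log 2 (real (card F')) / (real N * M)"
    using \<open>0 < N\<close> by simp
  also have "\<dots> \<le> C_exact n k d \<alpha> \<gamma>"
    using code \<open>k \<le> n\<close> by (intro dss_ratio_le_C_exact) (auto simp: dss_ratios_def)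
  finally show ?thesis .
qed

lemma sum_dss_ratios_le_C_exact:
  fixes n k d l :: nat and ns :: "nat \<Rightarrow> nat" and r :: "nat \<Rightarrow> real"
  assumes "k \<le> d" and "k \<le> n" and "n = (\<Sum>t<l. ns t)" and "\<And>t. t < l \<Longrightarrow> n < ns t + k"
    and "0 \<le> \<alpha>" and "0 \<le> \<gamma>"
    and r: "\<And>t. t < l \<Longrightarrow> r t \<in> dss_ratios (ns t) (ns t + k - n) (ns t + d - n) \<alpha> \<gamma>"
  shows "(\<Sum>t<l. r t) \<le> C_exact n k d \<alpha> \<gamma>"
proof -
  let ?code = "\<lambda>t M F enc. is_exact_dss (ns t) (ns t + k - n) (ns t + d - n) \<alpha> \<gamma> M F enc"
  have "\<forall>t\<in>{..<l}. \<exists>L>0. \<forall>M\<ge>L. \<exists>F enc. ?code t M F enc \<and> (M - L) * r t \<le> log 2 (real (card F))"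
    using dss_ratios_repeat[OF r assms(5,6)] by blast
  from bchoice[OF this] obtain L :: "nat \<Rightarrow> real" where L: "\<forall>t\<in>{..<l}. 0 < L t \<and>
      (\<forall>M\<ge>L t. \<exists>F enc. ?code t M F enc \<and> (M - L t) * r t \<le> log 2 (real (card F)))" ..
  have L_nonneg: "0 \<le> L t" if "t < l" for t using L that by (auto intro: less_imp_le)
  have r_nonneg: "0 \<le> r t" if "t < l" for t using dss_ratio_nonneg[OF r[OF that]] .
  show ?thesis
  proof (rule field_le_epsilon)
    fix \<epsilon> :: real assume "0 < \<epsilon>"
    define R where "R = (\<Sum>t<l. L t * r t)"
    define M where "M = (\<Sum>t<l. L t) + R / \<epsilon> + 1"
    have "0 \<le> R" unfolding R_def using L_nonneg r_nonneg by (intro sum_nonneg) simp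
    then have "0 \<le> R / \<epsilon>" using \<open>0 < \<epsilon>\<close> by simp
    have "0 \<le> (\<Sum>t<l. L t)" using L_nonneg by (intro sum_nonneg) simp
    then have "0 < M" and "R / \<epsilon> \<le> M" unfolding M_def using \<open>0 \<le> R / \<epsilon>\<close> by linarith+
    have "L t \<le> M" if "t < l" for t
      using member_le_sum[of t "{..<l}" L] L_nonneg that \<open>0 \<le> R / \<epsilon>\<close> unfolding M_def by fastforce
    then have "\<forall>t\<in>{..<l}. \<exists>F enc. ?code t M F enc \<and> (M - L t) * r t \<le> log 2 (real (card F))"
      using L by blast
    from bchoice[OF this] obtain F :: "nat \<Rightarrow> nat set"
      where "\<forall>t\<in>{..<l}. \<exists>enc. ?code t M (F t) enc \<and> (M - L t) * r t \<le> log 2 (real (card (F t)))" ..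
    from bchoice[OF this] obtain enc :: "nat \<Rightarrow> nat \<Rightarrow> nat \<Rightarrow> nat"
      where codes: "\<And>t. t < l \<Longrightarrow> ?code t M (F t) (enc t)"
        and log_F: "\<And>t. t < l \<Longrightarrow> (M - L t) * r t \<le> log 2 (real (card (F t)))" by auto
    have "(\<Sum>t<l. r t) - R / M = (\<Sum>t<l. (M - L t) * r t) / M"
      using \<open>0 < M\<close>
      by (simp add: R_def left_diff_distrib sum_subtractf diff_divide_distrib flip: sum_distrib_left)
    also have "\<dots> \<le> (\<Sum>t<l. log 2 (real (card (F t)))) / M"
      using log_F \<open>0 < M\<close> by (intro divide_right_mono sum_mono) auto
    also have "\<dots> \<le> C_exact n k d \<alpha> \<gamma>"
      by (rule sum_log_card_le_C_exact[OF assms(1-4) \<open>0 < M\<close> codes])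
    finally have "(\<Sum>t<l. r t) - R / M \<le> C_exact n k d \<alpha> \<gamma>" .
    moreover have "R / M \<le> \<epsilon>"
      using \<open>R / \<epsilon> \<le> M\<close> \<open>0 < \<epsilon>\<close> \<open>0 < M\<close> by (simp add: divide_le_eq mult.commute)
    ultimately show "(\<Sum>t<l. r t) \<le> C_exact n k d \<alpha> \<gamma> + \<epsilon>" by linarith
  qed
qed

lemma sum_C_exact_le_C_exact:
  fixes n k d l :: nat and ns :: "nat \<Rightarrow> nat"
  assumes "k \<le> d" and "k \<le> n" and "n = (\<Sum>t<l. ns t)" and "\<And>t. t < l \<Longrightarrow> n < ns t + k"
    and "0 \<le> \<alpha>" and "0 \<le> \<gamma>"
  shows "(\<Sum>t<l. C_exact (ns t) (ns t + k - n) (ns t + d - n) \<alpha> \<gamma>) \<le> C_exact n k d \<alpha> \<gamma>"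
proof (rule field_le_epsilon)
  fix \<epsilon> :: real assume "0 < \<epsilon>"
  define \<delta> where "\<delta> = \<epsilon> / (real l + 1)"
  have "0 < \<delta>" using \<open>0 < \<epsilon>\<close> by (simp add: \<delta>_def)
  have "ns t + k - n \<le> ns t" for t using \<open>k \<le> n\<close> by linarith
  then have "\<forall>t\<in>{..<l}. \<exists>r. r \<in> dss_ratios (ns t) (ns t + k - n) (ns t + d - n) \<alpha> \<gamma> \<and>
      C_exact (ns t) (ns t + k - n) (ns t + d - n) \<alpha> \<gamma> - \<delta> < r"
    using C_exact_approx[OF _ assms(5,6) \<open>0 < \<delta>\<close>] by blast
  from bchoice[OF this] obtain r where
    r: "\<And>t. t < l \<Longrightarrow> r t \<in> dss_ratios (ns t) (ns t + k - n) (ns t + d - n) \<alpha> \<gamma>"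
    and C_less: "\<And>t. t < l \<Longrightarrow> C_exact (ns t) (ns t + k - n) (ns t + d - n) \<alpha> \<gamma> - \<delta> < r t" by auto
  have "(\<Sum>t<l. C_exact (ns t) (ns t + k - n) (ns t + d - n) \<alpha> \<gamma>) \<le> (\<Sum>t<l. r t + \<delta>)"
    using C_less by (intro sum_mono) (fastforce simp: algebra_simps)
  also have "\<dots> = (\<Sum>t<l. r t) + real l * \<delta>" by (simp add: sum.distrib)
  also have "real l * \<delta> \<le> \<epsilon>" using \<open>0 < \<epsilon>\<close> by (simp add: \<delta>_def field_simps)
  also have "(\<Sum>t<l. r t) \<le> C_exact n k d \<alpha> \<gamma>" by (rule sum_dss_ratios_le_C_exact[OF assms(1-6) r])
  finally show "(\<Sum>t<l. C_exact (ns t) (ns t + k - n) (ns t + d - n) \<alpha> \<gamma>) \<le> C_exact n k d \<alpha> \<gamma> + \<epsilon>"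
    by simp
qed

theorem proposition6p1:
  fixes n k d l :: nat and ns :: "nat \<Rightarrow> nat" and \<alpha> \<gamma> :: real
  assumes "0 < k" and "k \<le> d" and "d < n"
    and "\<forall>j\<in>{1..l}. 0 < ns j"
    and "n = (\<Sum>j=1..l. ns j)"
    and "\<forall>j\<in>{1..l}. n - k + 1 \<le> ns j"
    and "0 < \<alpha>" and "0 < \<gamma>"
  shows "C_exact n k d \<alpha> \<gamma> \<ge>
           (\<Sum>j=1..l. C_exact (ns j) (ns j + k - n) (ns j + d - n) \<alpha> \<gamma>)"
proof -
  have "n = (\<Sum>t<l. ns (Suc t))" using assms(5) by (simp add: sum.atLeast1_atMost_eq)
  moreover have "n < ns (Suc t) + k" if "t < l" for t
  proof -
    have "n - k + 1 \<le> ns (Suc t)" using assms(6) that by simp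
    with assms(2,3) show ?thesis by linarith
  qed
  ultimately have "(\<Sum>t<l. C_exact (ns (Suc t)) (ns (Suc t) + k - n) (ns (Suc t) + d - n) \<alpha> \<gamma>)
      \<le> C_exact n k d \<alpha> \<gamma>"
    using assms(2,3,7,8) by (intro sum_C_exact_le_C_exact) auto
  then show ?thesis by (simp add: sum.atLeast1_atMost_eq)
qed

end
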